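(* Let $r\ge2$, $\alpha_1,\dots,\alpha_r>0$, $m>1$, $f(z)=\mathrm{sgn}(z)\frac{|z|^m}{1+|z|^m}$, and let $\Phi_t$ be the flow of $\dot x_1=f(x_r)-\alpha_1x_1$, $\dot x_j=x_{j-1}-\alpha_jx_j$ ($2\le j\le r$). Then the Jacobian $\frac{\partial\Phi_t}{\partial x}(x)$ has all entries strictly positive for every $x\neq0$ and every $t>0$, and the flow is strongly monotone: $x<y$ implies $\Phi_t(x)\ll\Phi_t(y)$ for all $t>0$.
   Context: Order on $\mathbb{R}^r$: $x\le y$ iff $x_i\le y_i$ for all $i$; $x<y$ iff $x\le y$ and $x\ne y$; $x\ll y$ iff $x_i<y_i$ for all $i$. Note that the Jacobian of the vector field fails to be irreducible on the hyperplane $\{x_r=0\}$ when $m>1$. *)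

theory Defs
  imports "HOL-Analysis.Analysis"
begin

text \<open>Coordinates of a vector in \<open>real^'n\<close> are labelled x_1..x_r via an enumeration
  \<open>e :: nat \<Rightarrow> 'n\<close>, bijective from {0..<r} (r = CARD('n)); paper index j corresponds to e (j-1).\<close>

definition hill :: "real \<Rightarrow> real \<Rightarrow> real" where
  "hill m z = sgn z * (\<bar>z\<bar> powr m / (1 + \<bar>z\<bar> powr m))"

definition cyc_field :: "real \<Rightarrow> (nat \<Rightarrow> real) \<Rightarrow> (nat \<Rightarrow> 'n::finite) \<Rightarrow> real^'n \<Rightarrow> real^'n" where
  "cyc_field m \<alpha> e x = (\<chi> i.
     (let k = inv_into {..<CARD('n)} e i in
      if k = 0 then hill m (x $ e (CARD('n) - 1)) - \<alpha> 0 * x $ i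
      else x $ e (k - 1) - \<alpha> k * x $ i))"

definition vle :: "real^'n \<Rightarrow> real^'n \<Rightarrow> bool" where
  "vle x y \<longleftrightarrow> (\<forall>i. x $ i \<le> y $ i)"

definition vlt :: "real^'n \<Rightarrow> real^'n \<Rightarrow> bool" where
  "vlt x y \<longleftrightarrow> vle x y \<and> x \<noteq> y"

definition vll :: "real^'n \<Rightarrow> real^'n \<Rightarrow> bool" where
  "vll x y \<longleftrightarrow> (\<forall>i. x $ i < y $ i)"

end

theory Submission
  imports Defs
begin

text \<open>The derivative of \<open>\<Phi> t\<close> at \<open>x\<close> is the solution \<open>Y\<close> of the variational equation
  \<open>Y' = A(t) Y\<close>, \<open>Y(0) = I\<close>, where \<open>A(t)\<close> has diagonal \<open>-\<alpha>\<^sub>i\<close>, the entry \<open>1\<close> at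
  \<open>(i, i - 1)\<close>, the entry \<open>f'(x\<^sub>r(t)) \<ge> 0\<close> at \<open>(1, r)\<close>, and zeros elsewhere. We build \<open>Y\<close> by
  Picard iteration of the variation-of-constants formula, whose iterates are nonnegative, and
  show that it is the derivative by a Gronwall estimate on the remainder.
  By the same formula \<open>Y\<^sub>i\<^sub>j(t)\<close> dominates an integral of \<open>A\<^sub>i\<^sub>,\<^sub>i\<^sub>-\<^sub>1 Y\<^sub>i\<^sub>-\<^sub>1\<^sub>,\<^sub>j\<close>, so positivity
  spreads from the diagonal once around the cycle. The only weak link \<open>f'(x\<^sub>r)\<close> vanishes
  exactly where \<open>x\<^sub>r\<close> does, and \<open>x\<^sub>r\<close> vanishing on an interval forces \<open>x = 0\<close>.
  Strong monotonicity follows by integrating the derivative along the segment from \<open>x\<close> to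
  \<open>y\<close>, which meets \<open>0\<close> at most once.\<close>

section \<open>The Hill nonlinearity\<close>

definition dhill :: "real \<Rightarrow> real \<Rightarrow> real" where
  "dhill m z = m * \<bar>z\<bar> powr (m - 1) / (1 + \<bar>z\<bar> powr m)^2"

lemma hill_denom_pos [simp]: "1 + \<bar>z::real\<bar> powr (m::real) > 0"
  using powr_ge_zero[of "\<bar>z\<bar>" m] by linarith

lemma hill_0 [simp]: "hill m 0 = 0"
  by (simp add: hill_def)

lemma has_real_derivative_powr_ratio:
  assumes "y > 0"
  shows "((\<lambda>y. y powr m / (1 + y powr m)) has_real_derivative
           m * y powr (m - 1) / (1 + y powr m)^2) (at y)"
proof -
  have "1 + y powr m \<noteq> 0" using assms by (smt (verit) powr_gt_zero)
  then have "((\<lambda>y. y powr m / (1 + y powr m)) has_real_derivative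
     ((m * y powr (m - 1)) * (1 + y powr m) - y powr m * (m * y powr (m - 1))) / (1 + y powr m)^2) (at y)"
    using assms by (auto intro!: derivative_eq_intros simp: power2_eq_square)
  then show ?thesis by (simp add: algebra_simps)
qed

lemma hill_has_real_derivative:
  assumes m: "m > 1"
  shows "(hill m has_real_derivative dhill m z) (at z)"
proof -
  consider "z > 0" | "z < 0" | "z = 0" by linarith
  then show ?thesis
  proof cases
    case 1
    show ?thesis
      by (rule has_field_derivative_transform_within_open[of "\<lambda>y. y powr m / (1 + y powr m)" _ _ "{0<..}"])
        (use has_real_derivative_powr_ratio[OF 1, of m] 1 in \<open>auto simp: dhill_def hill_def\<close>)
  next
    case 2
    have "((\<lambda>y. y powr m / (1 + y powr m)) has_real_derivative
           m * (-z) powr (m - 1) / (1 + (-z) powr m)^2) (at (-z))"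
      using has_real_derivative_powr_ratio[of "-z" m] 2 by simp
    from DERIV_minus[OF DERIV_chain2[OF this DERIV_minus[OF DERIV_ident]]]
    have "((\<lambda>y. - ((-y) powr m / (1 + (-y) powr m))) has_real_derivative dhill m z) (at z)"
      using 2 by (simp add: dhill_def)
    then show ?thesis
      by (rule has_field_derivative_transform_within_open[of _ _ _ "{..<0}"])
        (use 2 in \<open>auto simp: hill_def\<close>)
  next
    case 3
    have lim: "((\<lambda>y. \<bar>y\<bar> powr (m - 1)) \<longlongrightarrow> 0) (at 0)"
      by (rule tendsto_zero_powrI) (auto intro!: tendsto_eq_intros simp: m)
    have bound: "norm ((hill m y - hill m 0) / (y - 0)) \<le> \<bar>y\<bar> powr (m - 1)" for y
    proof (cases "y = 0")
      case False
      have "\<bar>hill m y\<bar> = \<bar>y\<bar> powr m / (1 + \<bar>y\<bar> powr m)"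
        using False by (auto simp: hill_def abs_mult sgn_if)
      also have "\<dots> \<le> \<bar>y\<bar> powr m"
        using powr_ge_zero[of "\<bar>y\<bar>" m] by (simp add: divide_le_eq distrib_left)
      also have "\<dots> = \<bar>y\<bar> powr (m - 1) * \<bar>y\<bar>"
        using False by (simp add: powr_diff)
      finally have "\<bar>hill m y\<bar> \<le> \<bar>y\<bar> powr (m - 1) * \<bar>y\<bar>" .
      then show ?thesis using False by (simp add: abs_divide divide_le_eq)
    qed simp
    have "((\<lambda>y. (hill m y - hill m 0) / (y - 0)) \<longlongrightarrow> 0) (at 0)"
      by (rule Lim_null_comparison[OF _ lim]) (use bound in auto)
    then show ?thesis using 3 by (simp add: has_field_derivative_iff dhill_def)
  qed
qed

lemma dhill_nonneg: "m \<ge> 0 \<Longrightarrow> dhill m z \<ge> 0"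
  by (simp add: dhill_def)

lemma dhill_pos:
  assumes "m > 0" "z \<noteq> 0"
  shows "dhill m z > 0"
proof -
  have "(1 + \<bar>z\<bar> powr m)^2 > 0" using hill_denom_pos[of z m] by (simp del: hill_denom_pos)
  then show ?thesis using assms by (simp add: dhill_def)
qed

lemma dhill_le:
  assumes m: "m \<ge> 1"
  shows "dhill m z \<le> m"
proof -
  let ?u = "\<bar>z\<bar>"
  have "?u powr (m - 1) \<le> (1 + ?u powr m)^2"
  proof (cases "?u \<le> 1")
    case True
    then have "?u powr (m - 1) \<le> 1" using m by (intro powr_le1) auto
    also have "1 \<le> (1 + ?u powr m)^2" by simp
    finally show ?thesis .
  next
    case False
    then have "?u powr (m - 1) \<le> ?u powr m" by (intro powr_mono) auto
    also have "\<dots> \<le> (1 + ?u powr m)^2"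
      using powr_ge_zero[of ?u m] by (simp add: power2_eq_square algebra_simps)
    finally show ?thesis .
  qed
  then have "m * (?u powr (m - 1) / (1 + ?u powr m)^2) \<le> m * 1"
    using m by (intro mult_left_mono) (auto simp: divide_le_eq)
  then show ?thesis by (simp add: dhill_def)
qed

lemma continuous_on_dhill:
  assumes "m > 1"
  shows "continuous_on S (dhill m)"
proof -
  have "(1 + \<bar>z\<bar> powr m)^2 \<noteq> 0" for z
    using hill_denom_pos[of z m] by (simp del: hill_denom_pos)
  then show ?thesis
    unfolding dhill_def
    using assms by (intro continuous_intros continuous_on_powr') (auto intro!: continuous_intros)
qed

lemma hill_mean_value:
  assumes "m > 1"
  obtains z where "\<bar>z - a\<bar> \<le> \<bar>b - a\<bar>" "hill m b - hill m a = (b - a) * dhill m z"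
proof (cases a b rule: linorder_cases)
  case less
  then obtain z where "a < z" "z < b" "hill m b - hill m a = (b - a) * dhill m z"
    using MVT2[OF less, of "hill m" "dhill m"] hill_has_real_derivative[OF assms] by auto
  then show ?thesis by (intro that[of z]) auto
next
  case greater
  then obtain z where "b < z" "z < a" "hill m a - hill m b = (a - b) * dhill m z"
    using MVT2[OF greater, of "hill m" "dhill m"] hill_has_real_derivative[OF assms] by auto
  then show ?thesis by (intro that[of z]) (auto simp: algebra_simps)
qed (use that in auto)

lemma hill_lipschitz:
  assumes "m > 1"
  shows "\<bar>hill m b - hill m a\<bar> \<le> m * \<bar>b - a\<bar>"
proof -
  obtain z where "hill m b - hill m a = (b - a) * dhill m z"
    using hill_mean_value[OF assms] .
  then show ?thesis
    using dhill_le[of m z] dhill_nonneg[of m z] assms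
    by (simp add: abs_mult mult.commute mult_right_mono)
qed

lemma hill_uniform_linear_approx:
  assumes m: "m > 1" and eps: "\<epsilon> > 0"
  obtains \<delta> where "\<delta> > 0" "\<And>a b. \<bar>a\<bar> \<le> B \<Longrightarrow> \<bar>b - a\<bar> < \<delta> \<Longrightarrow>
            \<bar>hill m b - hill m a - dhill m a * (b - a)\<bar> \<le> \<epsilon> * \<bar>b - a\<bar>"
proof -
  let ?I = "{-(\<bar>B\<bar> + 1)..\<bar>B\<bar> + 1}"
  have "uniformly_continuous_on ?I (dhill m)"
    by (rule compact_uniformly_continuous[OF continuous_on_dhill[OF m]]) auto
  then obtain d where d: "d > 0" and dd: "\<And>x x'. x \<in> ?I \<Longrightarrow> x' \<in> ?I
      \<Longrightarrow> dist x' x < d \<Longrightarrow> dist (dhill m x') (dhill m x) < \<epsilon>"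
    using eps unfolding uniformly_continuous_on_def by metis
  have "\<bar>hill m b - hill m a - dhill m a * (b - a)\<bar> \<le> \<epsilon> * \<bar>b - a\<bar>"
    if a: "\<bar>a\<bar> \<le> B" and ba: "\<bar>b - a\<bar> < min d 1" for a b
  proof -
    obtain z where z: "\<bar>z - a\<bar> \<le> \<bar>b - a\<bar>" "hill m b - hill m a = (b - a) * dhill m z"
      using hill_mean_value[OF m] .
    have "\<bar>dhill m z - dhill m a\<bar> \<le> \<epsilon>"
      using dd[of a z] a z ba by (force simp: dist_real_def)
    then have "\<bar>b - a\<bar> * \<bar>dhill m z - dhill m a\<bar> \<le> \<bar>b - a\<bar> * \<epsilon>"
      by (intro mult_left_mono) auto
    moreover have "hill m b - hill m a - dhill m a * (b - a) = (b - a) * (dhill m z - dhill m a)"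
      using z by (simp add: algebra_simps)
    ultimately show ?thesis by (simp add: abs_mult mult.commute)
  qed
  then show ?thesis using d by (intro that[of "min d 1"]) auto
qed

lemma variation_of_constants:
  fixes u g :: "real \<Rightarrow> real"
  assumes deriv: "\<And>s. (u has_real_derivative (g s - a * u s)) (at s)" and t: "0 \<le> t"
  shows "u t = exp (-a * t) * (u 0 + integral {0..t} (\<lambda>s. exp (a * s) * g s))"
proof -
  have "((\<lambda>s. exp (a * s) * u s) has_real_derivative exp (a * s) * g s) (at s)" for s
    using deriv[of s] by (auto intro!: derivative_eq_intros simp: algebra_simps)
  then have "((\<lambda>s. exp (a * s) * g s) has_integral (exp (a * t) * u t - exp (a * 0) * u 0)) {0..t}"
    by (intro fundamental_theorem_of_calculus[OF t])
       (auto simp: has_real_derivative_iff_has_vector_derivative[symmetric]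
             intro: has_field_derivative_at_within)
  then have "u 0 + integral {0..t} (\<lambda>s. exp (a * s) * g s) = exp (a * t) * u t"
    by (simp add: integral_unique)
  then show ?thesis by (simp add: exp_minus field_simps)
qed

lemma gronwall_integral:
  fixes v :: "real \<Rightarrow> real"
  assumes cont: "continuous_on {0..T} v"
    and le: "\<And>s. s \<in> {0..T} \<Longrightarrow> v s \<le> c + b * integral {0..s} v"
    and b: "b \<ge> 0" and s: "s \<in> {0..T}"
  shows "v s \<le> c * exp (b * s)"
proof -
  define W where "W \<sigma> = (c + b * integral {0..\<sigma>} v) * exp (-b * \<sigma>)" for \<sigma>
  have "W s \<le> W 0"
  proof (rule DERIV_nonpos_imp_decreasing_open[of 0 s W])
    show "0 \<le> s" using s by auto
    fix x assume x: "0 < x" "x < s"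
    then have "x \<in> interior {0..T}" "x \<in> {0..T}" using s by auto
    then have "((\<lambda>y. integral {0..y} v) has_real_derivative v x) (at x)"
      using integral_has_real_derivative[OF cont] at_within_interior by metis
    then have "(W has_real_derivative b * exp (-b * x) * (v x - (c + b * integral {0..x} v))) (at x)"
      unfolding W_def by (auto intro!: derivative_eq_intros simp: algebra_simps)
    moreover have "b * exp (-b * x) * (v x - (c + b * integral {0..x} v)) \<le> 0"
      using le[of x] x s b by (intro mult_nonneg_nonpos) auto
    ultimately show "\<exists>y. (W has_real_derivative y) (at x) \<and> y \<le> 0" by auto
  next
    have "continuous_on {0..s} (\<lambda>y. integral {0..y} v)"
      using s by (intro indefinite_integral_continuous_1 integrable_continuous_real
          continuous_on_subset[OF cont]) auto
    then show "continuous_on {0..s} W"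
      unfolding W_def by (intro continuous_intros) auto
  qed
  then have "c + b * integral {0..s} v \<le> c * exp (b * s)"
    by (simp add: W_def exp_minus field_simps)
  then show ?thesis using le[OF s] by linarith
qed

lemma integral_pos_continuous:
  fixes f :: "real \<Rightarrow> real"
  assumes cont: "continuous_on {a..b} f" and nonneg: "\<And>s. s \<in> {a..b} \<Longrightarrow> f s \<ge> 0"
    and s0: "s0 \<in> {a..b}" "f s0 > 0" and ab: "a < b"
  shows "integral {a..b} f > 0"
proof -
  have "integral {a..b} f \<ge> 0"
    using nonneg by (intro integral_nonneg integrable_continuous_real cont) auto
  moreover have "integral {a..b} f \<noteq> 0"
    using integral_eq_0_iff[OF cont ab nonneg] s0 by auto
  ultimately show ?thesis by linarith
qed

lemma abs_integral_le_continuous: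
  fixes f g :: "real \<Rightarrow> real"
  assumes "continuous_on {a..b} f" "continuous_on {a..b} g"
    "\<And>s. s \<in> {a..b} \<Longrightarrow> \<bar>f s\<bar> \<le> g s"
  shows "\<bar>integral {a..b} f\<bar> \<le> integral {a..b} g"
  using integral_norm_bound_integral[of f "{a..b}" g] assms
  by (auto intro: integrable_continuous_real)

lemma integral_power_0:
  assumes "s \<ge> (0::real)"
  shows "integral {0..s} (\<lambda>\<sigma>. \<sigma> ^ k) = s ^ Suc k / Suc k"
proof -
  have "((\<lambda>\<sigma>. \<sigma> ^ Suc k / Suc k) has_real_derivative x ^ k) (at x)" for x :: real
    using DERIV_cdivide[OF DERIV_pow[of "Suc k" x], of "Suc k"] by (simp del: of_nat_Suc)
  then have "((\<lambda>\<sigma>. \<sigma> ^ k) has_integral (s ^ Suc k / Suc k - 0 ^ Suc k / Suc k)) {0..s}"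
    by (intro fundamental_theorem_of_calculus[OF assms])
       (auto simp: has_real_derivative_iff_has_vector_derivative[symmetric]
             intro: has_field_derivative_at_within)
  then show ?thesis by (simp add: integral_unique)
qed

lemma strict_increasing_if_deriv_pos_but_one:
  fixes g :: "real \<Rightarrow> real"
  assumes deriv: "\<And>s. (g has_real_derivative g' s) (at s)"
    and nonneg: "\<And>s. g' s \<ge> 0" and pos: "\<And>s. s \<noteq> z \<Longrightarrow> g' s > 0" and ab: "a < b"
  shows "g a < g b"
proof -
  define c where "c = (a + b) / 2"
  have ac: "a < c" and cb: "c < b" using ab by (auto simp: c_def)
  obtain z1 where z1: "a < z1" "z1 < c" "g c - g a = (c - a) * g' z1"
    using MVT2[OF ac, of g g'] deriv by auto
  obtain z2 where z2: "c < z2" "z2 < b" "g b - g c = (b - c) * g' z2"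
    using MVT2[OF cb, of g g'] deriv by auto
  have "g' z1 > 0 \<or> g' z2 > 0" using z1 z2 pos by (cases "z1 = z") auto
  then have "(c - a) * g' z1 + (b - c) * g' z2 > 0"
    using nonneg[of z1] nonneg[of z2] ac cb
    by (auto intro: add_pos_nonneg add_nonneg_pos)
  then show ?thesis using z1 z2 by linarith
qed

lemma exp_kernel_le_1:
  assumes "(a::real) \<ge> 0" "\<sigma> \<le> s"
  shows "exp (-a * s) * exp (a * \<sigma>) \<le> 1"
  using mult_left_mono[OF assms(2,1)] by (simp flip: exp_add)

lemma exp_kernel_integral_bound:
  fixes F g :: "real \<Rightarrow> real"
  assumes a: "a \<ge> 0" and Fc: "continuous_on {0..s} F" and gc: "continuous_on {0..s} g"
    and bound: "\<And>\<sigma>. \<sigma> \<in> {0..s} \<Longrightarrow> \<bar>F \<sigma>\<bar> \<le> g \<sigma>"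
  shows "\<bar>exp (-a * s) * integral {0..s} (\<lambda>\<sigma>. exp (a * \<sigma>) * F \<sigma>)\<bar> \<le> integral {0..s} g"
proof -
  have "exp (-a * s) * integral {0..s} (\<lambda>\<sigma>. exp (a * \<sigma>) * F \<sigma>) =
      integral {0..s} (\<lambda>\<sigma>. (exp (-a * s) * exp (a * \<sigma>)) * F \<sigma>)"
    by (simp add: integral_mult_right mult.assoc)
  also have "\<bar>\<dots>\<bar> \<le> integral {0..s} g"
  proof (rule abs_integral_le_continuous[OF _ gc])
    show "continuous_on {0..s} (\<lambda>\<sigma>. (exp (-a * s) * exp (a * \<sigma>)) * F \<sigma>)"
      by (intro continuous_intros Fc)
    fix \<sigma> assume \<sigma>: "\<sigma> \<in> {0..s}"
    have "\<bar>exp (-a * s) * exp (a * \<sigma>) * F \<sigma>\<bar> = exp (-a * s) * exp (a * \<sigma>) * \<bar>F \<sigma>\<bar>"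
      by (simp add: abs_mult)
    also have "\<dots> \<le> 1 * g \<sigma>"
      using exp_kernel_le_1[OF a, of \<sigma> s] bound[OF \<sigma>] \<sigma> by (intro mult_mono) auto
    finally show "\<bar>exp (-a * s) * exp (a * \<sigma>) * F \<sigma>\<bar> \<le> g \<sigma>" by simp
  qed
  finally show ?thesis .
qed


section \<open>The cyclic system and its flow\<close>

locale cyclic_feedback_flow =
  fixes m :: real and \<alpha> :: "nat \<Rightarrow> real" and e :: "nat \<Rightarrow> 'n::finite"
    and \<Phi> :: "real \<Rightarrow> real^'n \<Rightarrow> real^'n"
  assumes e_bij: "bij_betw e {..<CARD('n)} UNIV"
    and alpha_pos: "\<And>k. k < CARD('n) \<Longrightarrow> \<alpha> k > 0"
    and m_gt_1: "m > 1"
    and flow_0: "\<And>x. \<Phi> 0 x = x"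
    and flow_ode: "\<And>x t. ((\<lambda>s. \<Phi> s x) has_vector_derivative cyc_field m \<alpha> e (\<Phi> t x)) (at t)"
begin

text \<open>Coordinate \<open>i\<close> is driven by \<open>prev i\<close> through \<open>input i\<close>, and \<open>gain x i s\<close> is the
  derivative of that input along the trajectory of \<open>x\<close>: the only off-diagonal entry in
  row \<open>i\<close> of the Jacobian.\<close>

definition index :: "'n \<Rightarrow> nat" where
  "index i = inv_into {..<CARD('n)} e i"

definition prev :: "'n \<Rightarrow> 'n" where
  "prev i = (if index i = 0 then e (CARD('n) - 1) else e (index i - 1))"

definition rate :: "'n \<Rightarrow> real" where
  "rate i = \<alpha> (index i)"

definition input :: "'n \<Rightarrow> real^'n \<Rightarrow> real" where
  "input i v = (if index i = 0 then hill m (v $ prev i) else v $ prev i)"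

definition gain :: "real^'n \<Rightarrow> 'n \<Rightarrow> real \<Rightarrow> real" where
  "gain x i s = (if index i = 0 then dhill m (\<Phi> s x $ prev i) else 1)"

lemma index_less: "index i < CARD('n)"
  unfolding index_def using e_bij by (metis bij_betw_def inv_into_into UNIV_I lessThan_iff)

lemma e_index [simp]: "e (index i) = i"
  unfolding index_def using e_bij by (metis bij_betw_def f_inv_into_f UNIV_I)

lemma index_e [simp]: "k < CARD('n) \<Longrightarrow> index (e k) = k"
  unfolding index_def using e_bij by (simp add: bij_betw_inv_into_left)

lemma rate_pos: "rate i > 0"
  unfolding rate_def using alpha_pos index_less by blast

lemma cyc_field_nth: "cyc_field m \<alpha> e v $ i = input i v - rate i * v $ i"
  unfolding cyc_field_def input_def rate_def prev_def index_def[symmetric] by (simp add: Let_def)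

lemma flow_nth_has_real_derivative:
  "((\<lambda>s. \<Phi> s x $ i) has_real_derivative (input i (\<Phi> t x) - rate i * \<Phi> t x $ i)) (at t)"
  using bounded_linear.has_vector_derivative[OF bounded_linear_vec_nth[of i] flow_ode[of x t]]
  by (simp add: has_real_derivative_iff_has_vector_derivative cyc_field_nth)

lemma isCont_flow: "isCont (\<lambda>s. \<Phi> s x) t"
  using has_vector_derivative_continuous[OF flow_ode] .

lemma isCont_flow_nth: "isCont (\<lambda>s. \<Phi> s x $ i) t"
  using DERIV_isCont[OF flow_nth_has_real_derivative] .

lemma continuous_on_flow_nth: "continuous_on S (\<lambda>s. \<Phi> s x $ i)"
  by (intro continuous_at_imp_continuous_on) (auto intro: isCont_flow_nth)

lemma isCont_hill_flow_nth: "isCont (\<lambda>s. hill m (\<Phi> s x $ j)) t"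
  using continuous_at_compose[OF isCont_flow_nth DERIV_isCont[OF hill_has_real_derivative[OF m_gt_1]]]
  by (simp add: o_def)

lemma isCont_dhill_flow_nth: "isCont (\<lambda>s. dhill m (\<Phi> s x $ j)) t"
proof -
  have "isCont (dhill m) z" for z
    using continuous_on_dhill[OF m_gt_1, of UNIV] by (simp add: continuous_on_eq_continuous_at)
  then show ?thesis
    using continuous_at_compose[OF isCont_flow_nth[where x = x and i = j and t = t], of "dhill m"]
    by (simp add: o_def)
qed

lemma continuous_on_input: "continuous_on S (\<lambda>s. input i (\<Phi> s x))"
  unfolding input_def
  by (cases "index i = 0")
     (simp_all add: continuous_at_imp_continuous_on isCont_hill_flow_nth isCont_flow_nth)

lemma continuous_on_gain: "continuous_on S (gain x i)"
  unfolding gain_def[abs_def]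
  by (cases "index i = 0") (simp_all add: continuous_at_imp_continuous_on isCont_dhill_flow_nth)

lemma gain_nonneg: "gain x i s \<ge> 0"
  using dhill_nonneg m_gt_1 by (simp add: gain_def)

lemma gain_le: "gain x i s \<le> m"
  using dhill_le m_gt_1 by (simp add: gain_def)

lemma input_lipschitz: "\<bar>input i u - input i v\<bar> \<le> m * \<bar>u $ prev i - v $ prev i\<bar>"
  using hill_lipschitz[OF m_gt_1] m_gt_1 by (simp add: input_def mult_le_cancel_right1)

lemma flow_nth_diff_eq:
  assumes "s \<ge> 0"
  shows "\<Phi> s y $ i - \<Phi> s x $ i = exp (-rate i * s) * ((y $ i - x $ i) +
           integral {0..s} (\<lambda>\<sigma>. exp (rate i * \<sigma>) * (input i (\<Phi> \<sigma> y) - input i (\<Phi> \<sigma> x))))"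
proof -
  have voc: "\<Phi> s z $ i =
      exp (-rate i * s) * (z $ i + integral {0..s} (\<lambda>\<sigma>. exp (rate i * \<sigma>) * input i (\<Phi> \<sigma> z)))" for z
    using variation_of_constants[OF flow_nth_has_real_derivative assms] flow_0 by simp
  have split: "integral {0..s} (\<lambda>\<sigma>. exp (rate i * \<sigma>) * (input i (\<Phi> \<sigma> y) - input i (\<Phi> \<sigma> x))) =
     integral {0..s} (\<lambda>\<sigma>. exp (rate i * \<sigma>) * input i (\<Phi> \<sigma> y))
     - integral {0..s} (\<lambda>\<sigma>. exp (rate i * \<sigma>) * input i (\<Phi> \<sigma> x))"
    unfolding right_diff_distrib
    by (intro integral_diff integrable_continuous_real continuous_intros continuous_on_input)
  show ?thesis
    unfolding split voc[of y] voc[of x] by (simp add: algebra_simps)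
qed

lemma flow_l1_dist_le:
  assumes t: "t \<ge> 0"
  shows "(\<Sum>i\<in>UNIV. \<bar>\<Phi> t y $ i - \<Phi> t x $ i\<bar>)
           \<le> (\<Sum>i\<in>UNIV. \<bar>y $ i - x $ i\<bar>) * exp (CARD('n) * m * t)"
proof -
  define V where "V s = (\<Sum>i\<in>UNIV. \<bar>\<Phi> s y $ i - \<Phi> s x $ i\<bar>)" for s
  have V_cont: "continuous_on S V" for S
    unfolding V_def by (intro continuous_intros continuous_on_flow_nth)
  have V_nth: "\<bar>\<Phi> s y $ i - \<Phi> s x $ i\<bar> \<le> \<bar>y $ i - x $ i\<bar> + integral {0..s} (\<lambda>\<sigma>. m * V \<sigma>)"
    if s: "s \<ge> 0" for s i
  proof -
    have "\<bar>exp (-rate i * s) * integral {0..s}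
            (\<lambda>\<sigma>. exp (rate i * \<sigma>) * (input i (\<Phi> \<sigma> y) - input i (\<Phi> \<sigma> x)))\<bar>
          \<le> integral {0..s} (\<lambda>\<sigma>. m * V \<sigma>)"
    proof (rule exp_kernel_integral_bound)
      fix \<sigma>
      have "\<bar>input i (\<Phi> \<sigma> y) - input i (\<Phi> \<sigma> x)\<bar> \<le> m * \<bar>\<Phi> \<sigma> y $ prev i - \<Phi> \<sigma> x $ prev i\<bar>"
        by (rule input_lipschitz)
      also have "\<dots> \<le> m * V \<sigma>"
        unfolding V_def using m_gt_1 by (intro mult_left_mono member_le_sum) auto
      finally show "\<bar>input i (\<Phi> \<sigma> y) - input i (\<Phi> \<sigma> x)\<bar> \<le> m * V \<sigma>" .
    qed (use rate_pos[of i] in \<open>auto intro!: continuous_intros continuous_on_input V_cont less_imp_le\<close>)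
    moreover have "\<bar>exp (-rate i * s) * (y $ i - x $ i)\<bar> \<le> \<bar>y $ i - x $ i\<bar>"
      using rate_pos[of i] s by (auto simp: abs_mult intro!: mult_left_le_one_le)
    ultimately show ?thesis
      unfolding flow_nth_diff_eq[OF s] distrib_left by (smt (verit, best) abs_triangle_ineq)
  qed
  have "V s \<le> V 0 + (CARD('n) * m) * integral {0..s} V" if "s \<in> {0..t}" for s
  proof -
    have "V s = (\<Sum>i\<in>UNIV. \<bar>\<Phi> s y $ i - \<Phi> s x $ i\<bar>)" by (rule V_def)
    also have "\<dots> \<le> (\<Sum>i\<in>UNIV. \<bar>y $ i - x $ i\<bar> + integral {0..s} (\<lambda>\<sigma>. m * V \<sigma>))"
      using that by (intro sum_mono V_nth) auto
    also have "\<dots> = V 0 + (CARD('n) * m) * integral {0..s} V"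
      by (simp add: V_def[of 0] flow_0 sum.distrib integral_mult_right)
    finally show ?thesis .
  qed
  then have "V t \<le> V 0 * exp (CARD('n) * m * t)"
    by (intro gronwall_integral[OF V_cont]) (use t m_gt_1 in auto)
  then show ?thesis by (simp add: V_def flow_0)
qed

lemma flow_nth_dist_le:
  assumes "\<sigma> \<in> {0..t}"
  shows "\<bar>\<Phi> \<sigma> y $ j - \<Phi> \<sigma> x $ j\<bar> \<le> CARD('n) * exp (CARD('n) * m * t) * norm (y - x)"
proof -
  have "\<bar>\<Phi> \<sigma> y $ j - \<Phi> \<sigma> x $ j\<bar> \<le> (\<Sum>i\<in>UNIV. \<bar>\<Phi> \<sigma> y $ i - \<Phi> \<sigma> x $ i\<bar>)"
    by (rule member_le_sum) auto
  also have "\<dots> \<le> (\<Sum>i\<in>UNIV. \<bar>y $ i - x $ i\<bar>) * exp (CARD('n) * m * \<sigma>)"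
    using assms by (intro flow_l1_dist_le) auto
  also have "\<dots> \<le> (CARD('n) * norm (y - x)) * exp (CARD('n) * m * t)"
  proof (rule mult_mono)
    show "(\<Sum>i\<in>UNIV. \<bar>y $ i - x $ i\<bar>) \<le> CARD('n) * norm (y - x)"
      using sum_mono[of UNIV "\<lambda>i. \<bar>y $ i - x $ i\<bar>" "\<lambda>_. norm (y - x)"]
        component_le_norm_cart[of "y - x"] by simp
  qed (use assms m_gt_1 in auto)
  finally show ?thesis by (simp add: mult_ac)
qed


subsection \<open>The sensitivity matrix\<close>

text \<open>\<open>sensitivity x i j t\<close> will be \<open>\<partial>(\<Phi> t x)\<^sub>i / \<partial>x\<^sub>j\<close>.\<close>

fun picard :: "real^'n \<Rightarrow> nat \<Rightarrow> 'n \<Rightarrow> 'n \<Rightarrow> real \<Rightarrow> real" where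
  "picard x 0 i j s = 0"
| "picard x (Suc k) i j s = exp (-rate i * s) * ((if i = j then 1 else 0) +
      integral {0..s} (\<lambda>\<sigma>. exp (rate i * \<sigma>) * gain x i \<sigma> * picard x k (prev i) j \<sigma>))"

declare picard.simps [simp del]

definition sensitivity :: "real^'n \<Rightarrow> 'n \<Rightarrow> 'n \<Rightarrow> real \<Rightarrow> real" where
  "sensitivity x i j s = (\<Sum>k. picard x (Suc k) i j s - picard x k i j s)"

lemma continuous_on_picard: "continuous_on {0..T} (picard x k i j)"
proof (induction k arbitrary: i j)
  case 0
  then show ?case by (simp add: picard.simps(1)[abs_def])
next
  case (Suc k)
  have "continuous_on {0..T}
      (\<lambda>s. integral {0..s} (\<lambda>\<sigma>. exp (rate i * \<sigma>) * gain x i \<sigma> * picard x k (prev i) j \<sigma>))"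
    by (intro indefinite_integral_continuous_1 integrable_continuous_real
        continuous_intros continuous_on_gain Suc.IH)
  then show ?case
    unfolding picard.simps(2)[abs_def] by (intro continuous_intros)
qed

lemma picard_nonneg: "s \<ge> 0 \<Longrightarrow> picard x k i j s \<ge> 0"
proof (induction k arbitrary: i j s)
  case (Suc k)
  have "integral {0..s} (\<lambda>\<sigma>. exp (rate i * \<sigma>) * gain x i \<sigma> * picard x k (prev i) j \<sigma>) \<ge> 0"
    using Suc.IH gain_nonneg
    by (intro integral_nonneg integrable_continuous_real continuous_intros
        continuous_on_gain continuous_on_picard) auto
  then show ?case by (simp add: picard.simps)
qed (simp add: picard.simps)

lemma picard_step_bound:
  "s \<ge> 0 \<Longrightarrow> \<bar>picard x (Suc k) i j s - picard x k i j s\<bar> \<le> (m * s) ^ k / fact k"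
proof (induction k arbitrary: i j s)
  case 0
  have "exp (-rate i * s) \<le> 1" using rate_pos[of i] 0 by simp
  then show ?case by (cases "i = j") (auto simp: picard.simps)
next
  case (Suc k)
  let ?f = "\<lambda>k \<sigma>. gain x i \<sigma> * picard x k (prev i) j \<sigma>"
  have f_cont: "continuous_on {0..s} (?f k)" for k
    by (intro continuous_intros continuous_on_gain continuous_on_picard)
  have picard_Suc: "picard x (Suc n) i j s = exp (-rate i * s) *
      ((if i = j then 1 else 0) + integral {0..s} (\<lambda>\<sigma>. exp (rate i * \<sigma>) * ?f n \<sigma>))" for n
    by (simp only: picard.simps(2) mult.assoc)
  have "picard x (Suc (Suc k)) i j s - picard x (Suc k) i j s
      = exp (-rate i * s) * (integral {0..s} (\<lambda>\<sigma>. exp (rate i * \<sigma>) * ?f (Suc k) \<sigma>)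
                            - integral {0..s} (\<lambda>\<sigma>. exp (rate i * \<sigma>) * ?f k \<sigma>))"
    unfolding picard_Suc[of "Suc k"] picard_Suc[of k] by (simp only: right_diff_distrib[symmetric] add_diff_cancel_left)
  also have "\<dots> = exp (-rate i * s) * integral {0..s} (\<lambda>\<sigma>. exp (rate i * \<sigma>) * (?f (Suc k) \<sigma> - ?f k \<sigma>))"
  proof -
    have "integral {0..s} (\<lambda>\<sigma>. exp (rate i * \<sigma>) * (?f (Suc k) \<sigma> - ?f k \<sigma>))
        = integral {0..s} (\<lambda>\<sigma>. exp (rate i * \<sigma>) * ?f (Suc k) \<sigma>)
          - integral {0..s} (\<lambda>\<sigma>. exp (rate i * \<sigma>) * ?f k \<sigma>)"
      unfolding right_diff_distrib
      by (intro integral_diff integrable_continuous_real continuous_intros f_cont)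
    then show ?thesis by (simp only:)
  qed
  finally have diff_eq: "picard x (Suc (Suc k)) i j s - picard x (Suc k) i j s
      = exp (-rate i * s) * integral {0..s} (\<lambda>\<sigma>. exp (rate i * \<sigma>) * (?f (Suc k) \<sigma> - ?f k \<sigma>))" .
  have "\<bar>exp (-rate i * s) * integral {0..s} (\<lambda>\<sigma>. exp (rate i * \<sigma>) * (?f (Suc k) \<sigma> - ?f k \<sigma>))\<bar>
      \<le> integral {0..s} (\<lambda>\<sigma>. (m ^ Suc k / fact k) * \<sigma> ^ k)"
  proof (rule exp_kernel_integral_bound)
    fix \<sigma> assume \<sigma>: "\<sigma> \<in> {0..s}"
    have "\<bar>?f (Suc k) \<sigma> - ?f k \<sigma>\<bar>
        = gain x i \<sigma> * \<bar>picard x (Suc k) (prev i) j \<sigma> - picard x k (prev i) j \<sigma>\<bar>"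
      by (simp only: right_diff_distrib[symmetric] abs_mult abs_of_nonneg[OF gain_nonneg])
    also have "\<dots> \<le> m * ((m * \<sigma>) ^ k / fact k)"
      using Suc.IH[of \<sigma>] \<sigma> gain_le gain_nonneg m_gt_1 by (intro mult_mono) auto
    finally show "\<bar>?f (Suc k) \<sigma> - ?f k \<sigma>\<bar> \<le> (m ^ Suc k / fact k) * \<sigma> ^ k"
      by (simp add: power_mult_distrib)
  next
    show "continuous_on {0..s} (\<lambda>\<sigma>. ?f (Suc k) \<sigma> - ?f k \<sigma>)"
      by (rule continuous_on_diff[OF f_cont f_cont])
  qed (use rate_pos[of i] in \<open>auto intro!: continuous_intros less_imp_le\<close>)
  also have "\<dots> = (m * s) ^ Suc k / fact (Suc k)"
    using integral_power_0[OF Suc.prems, of k]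
    by (simp add: integral_mult_right power_mult_distrib field_simps del: of_nat_Suc)
  finally show ?case unfolding diff_eq .
qed

lemma uniform_limit_picard:
  "uniform_limit {0..T} (\<lambda>n. picard x n i j) (sensitivity x i j) sequentially"
proof -
  have "uniform_limit {0..T} (\<lambda>n s. \<Sum>k<n. picard x (Suc k) i j s - picard x k i j s)
          (sensitivity x i j) sequentially"
    unfolding sensitivity_def[abs_def]
  proof (rule Weierstrass_m_test[where M = "\<lambda>k. (m * T) ^ k / fact k"])
    fix k s assume s: "s \<in> {0..T}"
    have "\<bar>picard x (Suc k) i j s - picard x k i j s\<bar> \<le> (m * s) ^ k / fact k"
      using s by (intro picard_step_bound) auto
    also have "\<dots> \<le> (m * T) ^ k / fact k"
      using s m_gt_1 by (intro divide_right_mono power_mono mult_left_mono) auto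
    finally show "norm (picard x (Suc k) i j s - picard x k i j s) \<le> (m * T) ^ k / fact k"
      by simp
  next
    show "summable (\<lambda>k. (m * T) ^ k / fact k)"
      using summable_exp[of "m * T"] by (simp add: divide_inverse mult.commute)
  qed
  moreover have "(\<Sum>k<n. picard x (Suc k) i j s - picard x k i j s) = picard x n i j s" for n s
    using sum_lessThan_telescope[of "\<lambda>k. picard x k i j s" n] by (simp add: picard.simps(1))
  ultimately show ?thesis by simp
qed

lemma continuous_on_sensitivity: "continuous_on {0..T} (sensitivity x i j)"
  by (rule uniform_limit_theorem[OF _ uniform_limit_picard])
     (auto intro: always_eventually continuous_on_picard)

lemma picard_tendsto: "s \<ge> 0 \<Longrightarrow> (\<lambda>n. picard x n i j s) \<longlonglongrightarrow> sensitivity x i j s"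
  by (rule tendsto_uniform_limitI[OF uniform_limit_picard[where T = s]]) auto

lemma sensitivity_nonneg: "s \<ge> 0 \<Longrightarrow> sensitivity x i j s \<ge> 0"
  by (rule LIMSEQ_le_const[OF picard_tendsto]) (auto intro: picard_nonneg)

lemma sensitivity_eq:
  assumes s: "s \<ge> 0"
  shows "sensitivity x i j s = exp (-rate i * s) * ((if i = j then 1 else 0) +
      integral {0..s} (\<lambda>\<sigma>. exp (rate i * \<sigma>) * gain x i \<sigma> * sensitivity x (prev i) j \<sigma>))"
proof -
  let ?c = "\<lambda>\<sigma>. exp (rate i * \<sigma>) * gain x i \<sigma>"
  have "continuous_on {0..s} ?c"
    by (intro continuous_intros continuous_on_gain)
  then have "uniform_limit {0..s} (\<lambda>n \<sigma>. ?c \<sigma> * picard x n (prev i) j \<sigma>)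
       (\<lambda>\<sigma>. ?c \<sigma> * sensitivity x (prev i) j \<sigma>) sequentially"
    by (intro uniform_lim_mult[OF uniform_limit_const uniform_limit_picard]
        compact_imp_bounded compact_continuous_image continuous_on_sensitivity) auto
  then obtain I J
    where I: "\<And>n. ((\<lambda>\<sigma>. ?c \<sigma> * picard x n (prev i) j \<sigma>) has_integral I n) {0..s}"
      and J: "((\<lambda>\<sigma>. ?c \<sigma> * sensitivity x (prev i) j \<sigma>) has_integral J) {0..s}"
      and IJ: "I \<longlonglongrightarrow> J"
    by (rule uniform_limit_integral)
       (auto intro!: continuous_intros continuous_on_gain continuous_on_picard)
  have "integral {0..s} (\<lambda>\<sigma>. ?c \<sigma> * picard x n (prev i) j \<sigma>) = I n" for n
    using I integral_unique by blast
  then have "(\<lambda>n. picard x (Suc n) i j s) = (\<lambda>n. exp (-rate i * s) * ((if i = j then 1 else 0) + I n))"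
    by (simp add: picard.simps(2))
  then have "(\<lambda>n. picard x (Suc n) i j s) \<longlonglongrightarrow> exp (-rate i * s) * ((if i = j then 1 else 0) + J)"
    by (simp add: tendsto_intros IJ)
  moreover have "(\<lambda>n. picard x (Suc n) i j s) \<longlonglongrightarrow> sensitivity x i j s"
    using LIMSEQ_Suc[OF picard_tendsto[OF s]] .
  ultimately show ?thesis
    using LIMSEQ_unique integral_unique[OF J] by metis
qed



subsection \<open>Differentiability of the flow\<close>

definition lin_response :: "real^'n \<Rightarrow> real^'n \<Rightarrow> 'n \<Rightarrow> real \<Rightarrow> real" where
  "lin_response x y i s = (\<Sum>j\<in>UNIV. sensitivity x i j s * (y $ j - x $ j))"

definition lin_remainder :: "real^'n \<Rightarrow> real^'n \<Rightarrow> 'n \<Rightarrow> real \<Rightarrow> real" where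
  "lin_remainder x y i s = \<Phi> s y $ i - \<Phi> s x $ i - lin_response x y i s"

lemma continuous_on_lin_response: "continuous_on {0..T} (lin_response x y i)"
  unfolding lin_response_def[abs_def] by (intro continuous_intros continuous_on_sensitivity)

lemma continuous_on_lin_remainder: "continuous_on {0..T} (lin_remainder x y i)"
  unfolding lin_remainder_def[abs_def]
  by (intro continuous_intros continuous_on_lin_response continuous_on_flow_nth)

lemma lin_response_eq:
  assumes s: "s \<ge> 0"
  shows "lin_response x y i s = exp (-rate i * s) * ((y $ i - x $ i) +
      integral {0..s} (\<lambda>\<sigma>. exp (rate i * \<sigma>) * gain x i \<sigma> * lin_response x y (prev i) \<sigma>))"
proof -
  let ?h = "\<lambda>j. y $ j - x $ j"
  let ?f = "\<lambda>j \<sigma>. exp (rate i * \<sigma>) * gain x i \<sigma> * sensitivity x (prev i) j \<sigma>"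
  have "lin_response x y i s = (\<Sum>j\<in>UNIV.
      exp (-rate i * s) * (if i = j then ?h j else 0) + exp (-rate i * s) * (integral {0..s} (?f j) * ?h j))"
    unfolding lin_response_def sensitivity_eq[OF s] by (intro sum.cong) (auto simp: algebra_simps)
  also have "\<dots> = exp (-rate i * s) * (?h i + (\<Sum>j\<in>UNIV. integral {0..s} (\<lambda>\<sigma>. ?f j \<sigma> * ?h j)))"
    by (simp add: sum.distrib sum_distrib_left[symmetric] distrib_left)
  also have "(\<Sum>j\<in>UNIV. integral {0..s} (\<lambda>\<sigma>. ?f j \<sigma> * ?h j)) = integral {0..s} (\<lambda>\<sigma>. \<Sum>j\<in>UNIV. ?f j \<sigma> * ?h j)"
    by (rule integral_sum[symmetric])
       (auto intro!: integrable_continuous_real continuous_intros continuous_on_gain continuous_on_sensitivity)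
  also have "(\<lambda>\<sigma>. \<Sum>j\<in>UNIV. ?f j \<sigma> * ?h j) = (\<lambda>\<sigma>. exp (rate i * \<sigma>) * gain x i \<sigma> * lin_response x y (prev i) \<sigma>)"
    by (simp add: lin_response_def sum_distrib_left mult.assoc)
  finally show ?thesis .
qed

lemma lin_remainder_eq:
  assumes s: "s \<ge> 0"
  shows "lin_remainder x y i s = exp (-rate i * s) * integral {0..s} (\<lambda>\<sigma>. exp (rate i * \<sigma>) *
      ((input i (\<Phi> \<sigma> y) - input i (\<Phi> \<sigma> x) - gain x i \<sigma> * (\<Phi> \<sigma> y $ prev i - \<Phi> \<sigma> x $ prev i))
        + gain x i \<sigma> * lin_remainder x y (prev i) \<sigma>))"
proof -
  let ?g = "\<lambda>\<sigma>. exp (rate i * \<sigma>) * (input i (\<Phi> \<sigma> y) - input i (\<Phi> \<sigma> x))"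
  let ?l = "\<lambda>\<sigma>. exp (rate i * \<sigma>) * gain x i \<sigma> * lin_response x y (prev i) \<sigma>"
  have "lin_remainder x y i s = exp (-rate i * s) * (integral {0..s} ?g - integral {0..s} ?l)"
    unfolding lin_remainder_def flow_nth_diff_eq[OF s] lin_response_eq[OF s] by (simp add: algebra_simps)
  also have "integral {0..s} ?g - integral {0..s} ?l = integral {0..s} (\<lambda>\<sigma>. ?g \<sigma> - ?l \<sigma>)"
    by (rule integral_diff[symmetric])
       (auto intro!: integrable_continuous_real continuous_intros continuous_on_input
         continuous_on_gain continuous_on_lin_response)
  also have "(\<lambda>\<sigma>. ?g \<sigma> - ?l \<sigma>) = (\<lambda>\<sigma>. exp (rate i * \<sigma>) *
      ((input i (\<Phi> \<sigma> y) - input i (\<Phi> \<sigma> x) - gain x i \<sigma> * (\<Phi> \<sigma> y $ prev i - \<Phi> \<sigma> x $ prev i))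
        + gain x i \<sigma> * lin_remainder x y (prev i) \<sigma>))"
    by (simp add: lin_remainder_def fun_eq_iff algebra_simps)
  finally show ?thesis .
qed

lemma lin_remainder_l1_bound:
  fixes c :: real
  assumes t: "t \<ge> 0" and c: "c \<ge> 0"
    and input_approx: "\<And>\<sigma> i. \<sigma> \<in> {0..t} \<Longrightarrow>
      \<bar>input i (\<Phi> \<sigma> y) - input i (\<Phi> \<sigma> x) - gain x i \<sigma> * (\<Phi> \<sigma> y $ prev i - \<Phi> \<sigma> x $ prev i)\<bar> \<le> c"
  shows "(\<Sum>i\<in>UNIV. \<bar>lin_remainder x y i t\<bar>) \<le> CARD('n) * c * t * exp (CARD('n) * m * t)"
proof -
  define W where "W \<sigma> = (\<Sum>i\<in>UNIV. \<bar>lin_remainder x y i \<sigma>\<bar>)" for \<sigma>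
  have W_cont: "continuous_on {0..T} W" for T
    unfolding W_def by (intro continuous_intros continuous_on_lin_remainder)
  have W_nth: "\<bar>lin_remainder x y i s\<bar> \<le> integral {0..s} (\<lambda>\<sigma>. c + m * W \<sigma>)"
    if s: "s \<in> {0..t}" for s :: real and i
    unfolding lin_remainder_eq[of s, OF atLeastAtMost_iff[THEN iffD1, OF s, THEN conjunct1]]
  proof (rule exp_kernel_integral_bound)
    fix \<sigma> assume "\<sigma> \<in> {0..s}"
    then have \<sigma>: "\<sigma> \<in> {0..t}" using s by auto
    have "\<bar>gain x i \<sigma> * lin_remainder x y (prev i) \<sigma>\<bar> \<le> m * W \<sigma>"
      unfolding abs_mult W_def using gain_nonneg gain_le m_gt_1
      by (intro mult_mono member_le_sum) auto
    then show "\<bar>(input i (\<Phi> \<sigma> y) - input i (\<Phi> \<sigma> x) - gain x i \<sigma> * (\<Phi> \<sigma> y $ prev i - \<Phi> \<sigma> x $ prev i))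
        + gain x i \<sigma> * lin_remainder x y (prev i) \<sigma>\<bar> \<le> c + m * W \<sigma>"
      using input_approx[OF \<sigma>, of i] by linarith
  qed (use rate_pos[of i] in \<open>auto intro!: continuous_intros continuous_on_input continuous_on_gain
        continuous_on_flow_nth continuous_on_lin_remainder W_cont less_imp_le\<close>)
  have "W s \<le> CARD('n) * c * t + (CARD('n) * m) * integral {0..s} W" if s: "s \<in> {0..t}" for s
  proof -
    have "W s \<le> (\<Sum>i\<in>(UNIV::'n set). integral {0..s} (\<lambda>\<sigma>. c + m * W \<sigma>))"
      unfolding W_def[of s] by (intro sum_mono W_nth s)
    also have "\<dots> = CARD('n) * (c * s + m * integral {0..s} W)"
      using s by (subst integral_add) (auto intro!: integrable_continuous_real continuous_intros W_cont
          simp: integral_mult_right)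
    also have "\<dots> \<le> CARD('n) * c * t + (CARD('n) * m) * integral {0..s} W"
      using s c by (simp add: algebra_simps mult_left_mono)
    finally show ?thesis .
  qed
  then have "W t \<le> (CARD('n) * c * t) * exp ((CARD('n) * m) * t)"
    by (intro gronwall_integral[OF W_cont]) (use t m_gt_1 in auto)
  then show ?thesis by (simp add: W_def mult.assoc)
qed

lemma bounded_flow_nth:
  obtains B where "\<And>\<sigma> j. \<sigma> \<in> {0..t} \<Longrightarrow> \<bar>\<Phi> \<sigma> x $ j\<bar> \<le> B"
proof -
  have "bounded ((\<lambda>\<sigma>. \<Phi> \<sigma> x) ` {0..t})"
    by (intro compact_imp_bounded compact_continuous_image continuous_at_imp_continuous_on
        ballI isCont_flow) auto
  then obtain B where "\<forall>\<sigma>\<in>{0..t}. norm (\<Phi> \<sigma> x) \<le> B"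
    unfolding bounded_iff by blast
  then show ?thesis using that component_le_norm_cart order_trans by metis
qed

lemma input_linearisation_small:
  assumes \<eta>: "\<eta> > 0"
  obtains d where "d > 0" "\<And>y \<sigma> i. norm (y - x) < d \<Longrightarrow> \<sigma> \<in> {0..t} \<Longrightarrow>
    \<bar>input i (\<Phi> \<sigma> y) - input i (\<Phi> \<sigma> x) - gain x i \<sigma> * (\<Phi> \<sigma> y $ prev i - \<Phi> \<sigma> x $ prev i)\<bar>
      \<le> \<eta> * norm (y - x)"
proof -
  define L where "L = CARD('n) * exp (CARD('n) * m * t)"
  have L: "L > 0" by (simp add: L_def)
  obtain B where B: "\<And>\<sigma> j. \<sigma> \<in> {0..t} \<Longrightarrow> \<bar>\<Phi> \<sigma> x $ j\<bar> \<le> B"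
    using bounded_flow_nth[where t = t and x = x] by metis
  obtain \<delta> where \<delta>: "\<delta> > 0" and hill_approx: "\<And>a b. \<bar>a\<bar> \<le> B \<Longrightarrow> \<bar>b - a\<bar> < \<delta> \<Longrightarrow>
      \<bar>hill m b - hill m a - dhill m a * (b - a)\<bar> \<le> (\<eta> / L) * \<bar>b - a\<bar>"
    using hill_uniform_linear_approx[OF m_gt_1, of "\<eta> / L"] \<eta> L by auto
  have "\<bar>input i (\<Phi> \<sigma> y) - input i (\<Phi> \<sigma> x) - gain x i \<sigma> * (\<Phi> \<sigma> y $ prev i - \<Phi> \<sigma> x $ prev i)\<bar>
      \<le> \<eta> * norm (y - x)" if y: "norm (y - x) < \<delta> / L" and \<sigma>: "\<sigma> \<in> {0..t}" for y \<sigma> i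
  proof (cases "index i = 0")
    case True
    let ?a = "\<Phi> \<sigma> x $ prev i" and ?b = "\<Phi> \<sigma> y $ prev i"
    have dist: "\<bar>?b - ?a\<bar> \<le> L * norm (y - x)"
      using flow_nth_dist_le[OF \<sigma>] by (simp add: L_def)
    also have "\<dots> < \<delta>" using y L by (simp add: field_simps)
    finally have "\<bar>hill m ?b - hill m ?a - dhill m ?a * (?b - ?a)\<bar> \<le> (\<eta> / L) * \<bar>?b - ?a\<bar>"
      using B[OF \<sigma>] by (intro hill_approx)
    also have "\<dots> \<le> (\<eta> / L) * (L * norm (y - x))"
      using dist \<eta> L by (intro mult_left_mono) auto
    finally show ?thesis using True L by (simp add: input_def gain_def)
  qed (use \<eta> in \<open>simp add: input_def gain_def\<close>)
  then show ?thesis using \<delta> L by (intro that[of "\<delta> / L"]) auto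
qed

lemma flow_has_derivative:
  assumes t: "t \<ge> 0"
  shows "(\<Phi> t has_derivative (*v) (\<chi> i j. sensitivity x i j t)) (at x)"
  unfolding has_derivative_within_alt
proof (intro conjI allI impI matrix_vector_mul_bounded_linear)
  fix \<epsilon> :: real assume \<epsilon>: "\<epsilon> > 0"
  define C where "C = CARD('n) * t * exp (CARD('n) * m * t)"
  have C: "C \<ge> 0" using t by (simp add: C_def)
  obtain d where d: "d > 0" and input_approx: "\<And>y \<sigma> i. norm (y - x) < d \<Longrightarrow> \<sigma> \<in> {0..t} \<Longrightarrow>
    \<bar>input i (\<Phi> \<sigma> y) - input i (\<Phi> \<sigma> x) - gain x i \<sigma> * (\<Phi> \<sigma> y $ prev i - \<Phi> \<sigma> x $ prev i)\<bar>
      \<le> \<epsilon> / (C + 1) * norm (y - x)"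
    using input_linearisation_small[of "\<epsilon> / (C + 1)"] \<epsilon> C by auto
  have "norm (\<Phi> t y - \<Phi> t x - (\<chi> i j. sensitivity x i j t) *v (y - x)) \<le> \<epsilon> * norm (y - x)"
    if y: "norm (y - x) < d" for y
  proof -
    have "norm (\<Phi> t y - \<Phi> t x - (\<chi> i j. sensitivity x i j t) *v (y - x))
        \<le> (\<Sum>i\<in>UNIV. \<bar>lin_remainder x y i t\<bar>)"
      using norm_le_l1_cart[of "\<Phi> t y - \<Phi> t x - (\<chi> i j. sensitivity x i j t) *v (y - x)"]
      by (simp add: lin_remainder_def lin_response_def matrix_vector_mult_def)
    also have "\<dots> \<le> CARD('n) * (\<epsilon> / (C + 1) * norm (y - x)) * t * exp (CARD('n) * m * t)"
      using input_approx[OF y] t \<epsilon> C by (intro lin_remainder_l1_bound) auto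
    also have "\<dots> = C * (\<epsilon> / (C + 1) * norm (y - x))"
      by (simp add: C_def mult_ac)
    also have "\<dots> \<le> \<epsilon> * norm (y - x)"
      using C \<epsilon> by (simp add: field_simps mult_left_mono)
    finally show ?thesis .
  qed
  then show "\<exists>d>0. \<forall>y\<in>UNIV. norm (y - x) < d \<longrightarrow>
      norm (\<Phi> t y - \<Phi> t x - (\<chi> i j. sensitivity x i j t) *v (y - x)) \<le> \<epsilon> * norm (y - x)"
    using d by blast
qed


subsection \<open>Positivity of the sensitivity matrix\<close>

lemma flow_prev_vanishes:
  assumes "index i \<noteq> 0" and vanish: "\<And>s. s \<in> {a<..<b} \<Longrightarrow> \<Phi> s x $ i = 0"
    and s: "s \<in> {a<..<b}"
  shows "\<Phi> s x $ prev i = 0"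
proof -
  have "((\<lambda>\<sigma>. \<Phi> \<sigma> x $ i) has_real_derivative 0) (at s)"
    by (rule has_field_derivative_transform_within_open[of "\<lambda>_. 0" _ _ "{a<..<b}"])
       (use s vanish in auto)
  then have "input i (\<Phi> s x) - rate i * \<Phi> s x $ i = 0"
    using DERIV_unique flow_nth_has_real_derivative by blast
  then show ?thesis using assms vanish[OF s] by (simp add: input_def)
qed

text \<open>Vanishing on an interval propagates backwards along the chain down to the first coordinate.\<close>

lemma flow_last_vanishes_imp_0:
  assumes t: "t > 0" and vanish: "\<And>s. s \<in> {0<..<t} \<Longrightarrow> \<Phi> s x $ e (CARD('n) - 1) = 0"
  shows "x = 0"
proof -
  have all: "\<Phi> s x $ e (CARD('n) - 1 - k) = 0" if "k < CARD('n)" "s \<in> {0<..<t}" for k s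
    using that
  proof (induction k arbitrary: s)
    case (Suc k)
    let ?i = "e (CARD('n) - 1 - k)"
    have "index ?i = CARD('n) - 1 - k" using Suc.prems by simp
    then have "index ?i \<noteq> 0" "prev ?i = e (CARD('n) - 1 - Suc k)"
      using Suc.prems by (auto simp: prev_def)
    then show ?case using flow_prev_vanishes[of ?i 0 t x s] Suc by auto
  qed (use vanish in simp)
  have "x $ i = 0" for i
  proof -
    have "CARD('n) - 1 - (CARD('n) - 1 - index i) = index i" using index_less[of i] by simp
    then have "eventually (\<lambda>s. \<Phi> s x $ i = 0) (at_right 0)"
      unfolding eventually_at_right_field
      using t all[of "CARD('n) - 1 - index i"] by (intro exI[of _ t]) auto
    then have "((\<lambda>s. \<Phi> s x $ i) \<longlongrightarrow> 0) (at_right 0)"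
      by (simp add: tendsto_eventually)
    moreover have "((\<lambda>s. \<Phi> s x $ i) \<longlongrightarrow> \<Phi> 0 x $ i) (at_right 0)"
      using isCont_flow_nth[where x=x and i=i and t=0] by (simp add: continuous_at filterlim_at_split)
    ultimately show ?thesis
      using tendsto_unique trivial_limit_at_right_real flow_0 by metis
  qed
  then show ?thesis by (simp add: vec_eq_iff)
qed

lemma sensitivity_ge_feed:
  assumes s: "s \<ge> 0"
  shows "sensitivity x i j s \<ge>
    exp (-rate i * s) * integral {0..s} (\<lambda>\<sigma>. exp (rate i * \<sigma>) * gain x i \<sigma> * sensitivity x (prev i) j \<sigma>)"
  and "integral {0..s} (\<lambda>\<sigma>. exp (rate i * \<sigma>) * gain x i \<sigma> * sensitivity x (prev i) j \<sigma>) \<ge> 0"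
proof -
  show nonneg: "integral {0..s} (\<lambda>\<sigma>. exp (rate i * \<sigma>) * gain x i \<sigma> * sensitivity x (prev i) j \<sigma>) \<ge> 0"
    using sensitivity_nonneg gain_nonneg
    by (intro integral_nonneg integrable_continuous_real continuous_intros
        continuous_on_gain continuous_on_sensitivity) auto
  then show "sensitivity x i j s \<ge>
    exp (-rate i * s) * integral {0..s} (\<lambda>\<sigma>. exp (rate i * \<sigma>) * gain x i \<sigma> * sensitivity x (prev i) j \<sigma>)"
    using sensitivity_eq[OF s, of x i j] by (simp add: distrib_left)
qed

lemma sensitivity_diag_pos: "s > 0 \<Longrightarrow> sensitivity x j j s > 0"
  using sensitivity_eq[of s x j j] sensitivity_ge_feed(2)[where s=s and x=x and i=j and j=j]
  by (simp add: add_pos_nonneg)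

lemma prev_e_Suc_mod: "prev (e (Suc n mod CARD('n))) = e (n mod CARD('n))"
proof -
  have "index (e (Suc n mod CARD('n))) = Suc n mod CARD('n)" by simp
  moreover have "n mod CARD('n) = CARD('n) - 1" if "Suc (n mod CARD('n)) = CARD('n)"
    using that by linarith
  ultimately show ?thesis
    by (cases "Suc (n mod CARD('n)) = CARD('n)") (auto simp: prev_def mod_Suc)
qed

text \<open>Only the step into the first coordinate needs \<open>x \<noteq> 0\<close>: there the gain \<^const>\<open>dhill\<close>
  vanishes where the last coordinate does, which cannot happen on a whole interval.\<close>

lemma sensitivity_pos_around_cycle:
  assumes x: "x \<noteq> 0" and j: "j < CARD('n)"
  shows "d < CARD('n) \<Longrightarrow> t > 0 \<Longrightarrow> sensitivity x (e ((j + d) mod CARD('n))) (e j) t > 0"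
proof (induction d arbitrary: t)
  case 0
  then show ?case using sensitivity_diag_pos j by simp
next
  case (Suc d)
  let ?i = "e ((j + Suc d) mod CARD('n))"
  have prev_i: "prev ?i = e ((j + d) mod CARD('n))"
    using prev_e_Suc_mod[of "j + d"] by simp
  let ?f = "\<lambda>\<sigma>. exp (rate ?i * \<sigma>) * gain x ?i \<sigma> * sensitivity x (prev ?i) (e j) \<sigma>"
  have "\<exists>s0\<in>{0<..t}. ?f s0 > 0"
  proof (cases "index ?i = 0")
    case True
    obtain s0 where s0: "s0 \<in> {0<..<t}" "\<Phi> s0 x $ e (CARD('n) - 1) \<noteq> 0"
      using flow_last_vanishes_imp_0[OF Suc.prems(2)] x by blast
    have "gain x ?i s0 > 0" using True s0 dhill_pos m_gt_1 by (simp add: gain_def prev_def)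
    moreover have "sensitivity x (prev ?i) (e j) s0 > 0" using Suc s0 prev_i by simp
    ultimately show ?thesis using s0 by (intro bexI[of _ s0]) auto
  next
    case False
    then show ?thesis using Suc prev_i by (intro bexI[of _ t]) (auto simp: gain_def)
  qed
  then obtain s0 where "s0 \<in> {0<..t}" "?f s0 > 0" by blast
  then have "integral {0..t} ?f > 0"
    using Suc.prems sensitivity_nonneg gain_nonneg
    by (intro integral_pos_continuous[of 0 t ?f s0])
       (auto intro!: continuous_intros continuous_on_gain continuous_on_sensitivity)
  then show ?case
    using sensitivity_ge_feed(1)[where s=t and x=x and i="?i" and j="e j"] Suc.prems
    by (smt (verit, best) exp_gt_zero mult_pos_pos)
qed

lemma sensitivity_pos:
  assumes "x \<noteq> 0" "t > 0"
  shows "sensitivity x i j t > 0"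
proof -
  define d where "d = (index i + CARD('n) - index j) mod CARD('n)"
  have "(index j + d) mod CARD('n) = (index i + CARD('n)) mod CARD('n)"
    unfolding d_def using index_less[of j] by (simp add: mod_add_right_eq)
  then have "e ((index j + d) mod CARD('n)) = i" using index_less[of i] by simp
  then show ?thesis
    using sensitivity_pos_around_cycle[OF assms(1) index_less[of j], of d t] assms(2)
    by (simp add: d_def)
qed


lemma flow_strongly_monotone:
  assumes xy: "vlt x y" and t: "t > 0"
  shows "vll (\<Phi> t x) (\<Phi> t y)"
  unfolding vll_def
proof
  fix i
  define h where "h = y - x"
  have h_nonneg: "h $ j \<ge> 0" for j using xy unfolding vlt_def vle_def h_def by simp
  obtain j1 where j1: "h $ j1 > 0"
    using xy h_nonneg unfolding vlt_def h_def by (metis less_eq_real_def vec_eq_iff zero_index right_minus_eq)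
  define p where "p s = x + s *\<^sub>R h" for s
  define D where "D s = (\<Sum>j\<in>UNIV. sensitivity (p s) i j t * h $ j)" for s
  have deriv: "((\<lambda>s. \<Phi> t (p s) $ i) has_real_derivative D s) (at s)" for s
  proof -
    have "(p has_derivative (\<lambda>u. u *\<^sub>R h)) (at s)"
      unfolding p_def by (auto intro!: derivative_eq_intros)
    from diff_chain_at[OF this flow_has_derivative] t
    have "((\<lambda>s. \<Phi> t (p s)) has_derivative (*v) (\<chi> a b. sensitivity (p s) a b t) \<circ> (\<lambda>u. u *\<^sub>R h)) (at s)"
      by (simp add: o_def)
    then have "((\<lambda>s. \<Phi> t (p s)) has_vector_derivative (\<chi> a b. sensitivity (p s) a b t) *v h) (at s)"
      by (simp add: has_vector_derivative_def o_def matrix_vector_mult_scaleR)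
    from bounded_linear.has_vector_derivative[OF bounded_linear_vec_nth[of i] this]
    show ?thesis
      by (simp add: has_real_derivative_iff_has_vector_derivative D_def matrix_vector_mult_def)
  qed
  have D_nonneg: "D s \<ge> 0" for s
    unfolding D_def using sensitivity_nonneg h_nonneg t by (intro sum_nonneg mult_nonneg_nonneg) auto
  have p_inj: "p s = p s' \<Longrightarrow> s = s'" for s s'
    using j1 by (auto simp: p_def vec_eq_iff)
  define s0 where "s0 = (SOME s. p s = 0)"
  have D_pos: "D s > 0" if "s \<noteq> s0" for s
  proof -
    have "p s \<noteq> 0" using that p_inj someI[of "\<lambda>s. p s = 0" s] unfolding s0_def by metis
    then show ?thesis
      unfolding D_def using sensitivity_pos[OF _ t] sensitivity_nonneg t h_nonneg j1
      by (intro sum_pos2[of UNIV j1]) (auto intro: mult_nonneg_nonneg)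
  qed
  have "\<Phi> t (p 0) $ i < \<Phi> t (p 1) $ i"
    using strict_increasing_if_deriv_pos_but_one[where z = s0 and a = 0 and b = 1, OF deriv D_nonneg D_pos] by simp
  then show "\<Phi> t x $ i < \<Phi> t y $ i" by (simp add: p_def h_def)
qed

end

theorem mainTheorem9:
  fixes m :: real and \<alpha> :: "nat \<Rightarrow> real" and e :: "nat \<Rightarrow> 'n::finite"
    and \<Phi> :: "real \<Rightarrow> real^'n \<Rightarrow> real^'n"
  assumes r2: "CARD('n) \<ge> 2"
    and e_bij: "bij_betw e {..<CARD('n)} UNIV"
    and alpha_pos: "\<And>k. k < CARD('n) \<Longrightarrow> \<alpha> k > 0"
    and m1: "m > 1"
    and flow0: "\<And>x. \<Phi> 0 x = x"
    and flow_ode: "\<And>x t. ((\<lambda>s. \<Phi> s x) has_vector_derivative cyc_field m \<alpha> e (\<Phi> t x)) (at t)"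
  shows "(\<forall>x t. x \<noteq> 0 \<longrightarrow> t > 0 \<longrightarrow>
            (\<exists>D. (\<Phi> t has_derivative D) (at x) \<and> (\<forall>i j. matrix D $ i $ j > 0)))
       \<and> (\<forall>x y t. vlt x y \<longrightarrow> t > 0 \<longrightarrow> vll (\<Phi> t x) (\<Phi> t y))"
proof -
  interpret cyclic_feedback_flow m \<alpha> e \<Phi>
    using e_bij alpha_pos m1 flow0 flow_ode by unfold_locales
  show ?thesis
  proof (intro conjI allI impI)
    fix x :: "real^'n" and t :: real
    assume "x \<noteq> 0" "t > 0"
    then show "\<exists>D. (\<Phi> t has_derivative D) (at x) \<and> (\<forall>i j. matrix D $ i $ j > 0)"
      using flow_has_derivative[of t x] sensitivity_pos
      by (intro exI[of _ "(*v) (\<chi> i j. sensitivity x i j t)"]) (simp add: matrix_of_matrix_vector_mul)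
  next
    fix x y :: "real^'n" and t :: real
    show "vlt x y \<Longrightarrow> t > 0 \<Longrightarrow> vll (\<Phi> t x) (\<Phi> t y)" by (rule flow_strongly_monotone)
  qed
qed

end
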